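(* Let $n\ge1$ and let $I=(e_1,\dots,e_n)$ be the identity matrix (standard basis). Let $W\subset\mathcal{S}^2(\mathbb{R}^n)^n$ be the subspace of $(q_1,\dots,q_n)$ such that for all $i,j=1,\dots,n$: $q_j(e_j,e_j)=0$, $\langle e_i,q_j(e_i,e_i)\rangle+\langle e_j,q_i(e_j,e_j)\rangle=0$, and $\langle e_1,q_1(e_j,e_j)\rangle=0$. If $\ker L^\Psi_I\cap W=\{0\}$, then $\ker L^\Psi_I=\operatorname{Im}L^\Phi_I$.
   Context: $\mathcal{S}^r(\mathbb{R}^n)$ denotes symmetric $r$-linear maps $(\mathbb{R}^n)^r\to\mathbb{R}^n$; $\langle\cdot,\cdot\rangle$ is the Euclidean inner product. For $v\in\mathbb{R}^n$, $Q_v(\xi,\eta)=\langle\xi,\eta\rangle v-\langle\xi,v\rangle\eta-\langle\eta,v\rangle\xi$. For $Q\in\mathcal{S}^2(\mathbb{R}^n)$ and matrices $A,C$: $Q\circ(A,C)(\xi,\eta)=Q(A\xi,C\eta)$, $A\circ Q(\xi,\eta)=A(Q(\xi,\eta))$. For $Q,Q'\in\mathcal{S}^2(\mathbb{R}^n)$, $[Q,Q'](\xi,\eta,\theta)=\{Q(\xi,Q'(\eta,\theta))+Q(\eta,Q'(\theta,\xi))+Q(\theta,Q'(\xi,\eta))\}-\{Q'(\xi,Q(\eta,\theta))+Q'(\eta,Q(\theta,\xi))+Q'(\theta,Q(\xi,\eta))\}$. For $B=(v_1,\dots,v_n)\in\mathrm{GL}_n(\mathbb{R})$, $L^\Phi_B:M_n(\mathbb{R})^2\to\mathcal{S}^2(\mathbb{R}^n)^n$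 is $L^\Phi_B(A',B'')=(A'\circ Q_{v_i}-Q_{v_i}\circ(A',I)-Q_{v_i}\circ(I,A')+Q_{\omega_i})_{1\le i\le n}$ where $B''=(\omega_1,\dots,\omega_n)$, and $L^\Psi_B(q_1,\dots,q_n)=([q_i,Q_{v_j}]-[q_j,Q_{v_i}])_{1\le i<j\le n}\in\mathcal{S}^3(\mathbb{R}^n)^{n(n-1)/2}$. Here $B=I$, so $v_i=e_i$. *)

theory Defs
  imports "HOL-Analysis.Analysis"
begin

text \<open>Dimension n is encoded by a finite, well-ordered index type 'n (n = CARD('n) \<ge> 1);
  e_i = axis i 1; the index "1" is the least element of 'n.\<close>

type_synonym 'n S2 = "real^'n \<Rightarrow> real^'n \<Rightarrow> real^'n"
type_synonym 'n S3 = "real^'n \<Rightarrow> real^'n \<Rightarrow> real^'n \<Rightarrow> real^'n"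

definition ebasis :: "'n::finite \<Rightarrow> real^'n" where
  "ebasis i = axis i 1"

definition first_idx :: "'n::{finite,wellorder}" where
  "first_idx = (LEAST i. True)"

definition symbil :: "('n::finite) S2 set" where
  "symbil = {Q. bilinear Q \<and> (\<forall>x y. Q x y = Q y x)}"

definition S2tuples :: "('n::finite \<Rightarrow> 'n S2) set" where
  "S2tuples = {q. \<forall>i. q i \<in> symbil}"

definition Qv :: "real^'n::finite \<Rightarrow> 'n S2" where
  "Qv v \<xi> \<eta> = (\<xi> \<bullet> \<eta>) *\<^sub>R v - (\<xi> \<bullet> v) *\<^sub>R \<eta> - (\<eta> \<bullet> v) *\<^sub>R \<xi>"

definition bracket :: "('n::finite) S2 \<Rightarrow> 'n S2 \<Rightarrow> 'n S3" where
  "bracket Q Q' \<xi> \<eta> \<theta> =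
     (Q \<xi> (Q' \<eta> \<theta>) + Q \<eta> (Q' \<theta> \<xi>) + Q \<theta> (Q' \<xi> \<eta>))
   - (Q' \<xi> (Q \<eta> \<theta>) + Q' \<eta> (Q \<theta> \<xi>) + Q' \<theta> (Q \<xi> \<eta>))"

text \<open>L^Phi_I (A', B''), with B'' = (omega_1, ..., omega_n) given by its columns.\<close>
definition LPhi :: "real^'n^'n \<Rightarrow> real^'n^'n \<Rightarrow> ('n::finite \<Rightarrow> 'n S2)" where
  "LPhi A B i = (\<lambda>\<xi> \<eta>. A *v (Qv (ebasis i) \<xi> \<eta>) - Qv (ebasis i) (A *v \<xi>) \<eta>
       - Qv (ebasis i) \<xi> (A *v \<eta>) + Qv (column i B) \<xi> \<eta>)"

definition LPsi :: "('n::finite \<Rightarrow> 'n S2) \<Rightarrow> 'n \<Rightarrow> 'n \<Rightarrow> 'n S3" where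
  "LPsi q i j = (\<lambda>\<xi> \<eta> \<theta>. bracket (q i) (Qv (ebasis j)) \<xi> \<eta> \<theta>
                          - bracket (q j) (Qv (ebasis i)) \<xi> \<eta> \<theta>)"

definition kerPsi :: "('n::{finite,wellorder} \<Rightarrow> 'n S2) set" where
  "kerPsi = {q \<in> S2tuples. \<forall>i j. i < j \<longrightarrow> LPsi q i j = (\<lambda>\<xi> \<eta> \<theta>. 0)}"

definition imPhi :: "('n::finite \<Rightarrow> 'n S2) set" where
  "imPhi = {LPhi A B | A B. True}"

definition Wsub :: "('n::{finite,wellorder} \<Rightarrow> 'n S2) set" where
  "Wsub = {q \<in> S2tuples. \<forall>i j.
       q j (ebasis j) (ebasis j) = 0
     \<and> ebasis i \<bullet> q j (ebasis i) (ebasis i) + ebasis j \<bullet> q i (ebasis j) (ebasis j) = 0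
     \<and> ebasis first_idx \<bullet> q first_idx (ebasis j) (ebasis j) = 0}"

end

theory Submission
  imports Defs
begin

text \<open>The inclusion Im L^Phi \<subseteq> ker L^Psi is a direct identity. Conversely, given q in the kernel,
  one chooses (A, B) so that q - L^Phi(A, B) satisfies the defining equations of W: these
  equations only involve the coordinates of q_j(e_i, e_i), and they form a triangular system for
  the entries of A and B. Since the kernel is a linear space containing the image, q - L^Phi(A, B)
  lies in the kernel and in W, hence vanishes.\<close>

lemma LPsi_LPhi: "LPsi (LPhi A B) i j = (\<lambda>\<xi> \<eta> \<theta>. 0)"
  unfolding LPsi_def LPhi_def bracket_def Qv_def fun_eq_iff
  by (simp add: inner_diff_right inner_diff_left inner_add_left inner_add_right
      algebra_simps inner_commute)

lemma LPhi_in_S2tuples: "LPhi A B \<in> S2tuples"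
proof -
  have "bilinear (LPhi A B i)" for i
    unfolding bilinear_def LPhi_def Qv_def
    by (auto intro!: linearI simp: inner_diff_right inner_diff_left inner_add_left
        inner_add_right algebra_simps)
  moreover have "LPhi A B i x y = LPhi A B i y x" for i x y
    unfolding LPhi_def Qv_def by (simp add: algebra_simps inner_commute)
  ultimately show ?thesis by (simp add: S2tuples_def symbil_def)
qed

lemma imPhi_subset_kerPsi: "imPhi \<subseteq> kerPsi"
  by (auto simp: imPhi_def kerPsi_def LPhi_in_S2tuples LPsi_LPhi)

lemma diff_in_S2tuples:
  assumes "q \<in> S2tuples" "p \<in> S2tuples"
  shows "(\<lambda>i x y. q i x y - p i x y) \<in> S2tuples"
  using assms unfolding S2tuples_def symbil_def bilinear_def
  by (auto intro: linear_compose_sub)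

lemma LPsi_diff:
  "LPsi (\<lambda>i x y. q i x y - p i x y) i j x y z = LPsi q i j x y z - LPsi p i j x y z"
  unfolding LPsi_def bracket_def Qv_def
  by (simp add: inner_diff_right inner_diff_left inner_add_left inner_add_right algebra_simps)

lemma diff_in_kerPsi:
  assumes "q \<in> kerPsi" "p \<in> kerPsi"
  shows "(\<lambda>i x y. q i x y - p i x y) \<in> kerPsi"
  using assms diff_in_S2tuples by (auto simp: kerPsi_def LPsi_diff fun_eq_iff)

lemma ebasis_inner: "ebasis i \<bullet> x = x $ i"
  by (simp add: ebasis_def inner_axis')

lemma LPhi_ebasis_ebasis_nth:
  "LPhi A B i (ebasis k) (ebasis k) $ m =
     A$m$i - 2 * A$k$k * (if m = i then 1 else 0) + 2 * A$i$k * (if m = k then 1 else 0)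
     + B$m$i - 2 * B$k$i * (if m = k then 1 else 0)"
proof -
  have double: "(A *v (2 * x)) $ m = 2 * (A *v x) $ m" for x :: "real^'a"
    by (simp add: matrix_vector_mult_def sum_distrib_left algebra_simps)
  have axis_nth: "axis k (1::real) $ m = (if m = k then 1 else 0)" for k m :: 'a
    by (simp add: axis_def)
  show ?thesis
    unfolding LPhi_def Qv_def ebasis_def
    by (simp add: matrix_vector_mult_diff_distrib matrix_vector_mult_scaleR inner_axis_axis
        inner_axis inner_axis' matrix_vector_mult_basis column_def axis_nth double
        cart_eq_inner_axis[symmetric] inner_commute)
qed

definition diag_coeff :: "('n::finite \<Rightarrow> 'n S2) \<Rightarrow> 'n \<Rightarrow> 'n \<Rightarrow> 'n \<Rightarrow> real" where
  "diag_coeff q i j m = q j (ebasis i) (ebasis i) $ m"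

text \<open>The diagonal of A is chosen to meet the condition on q_1, the symmetric off-diagonal part
  of A to meet the antisymmetry condition, and then B to make each q_j(e_j, e_j) vanish.\<close>

definition normalizing_A :: "('n::{finite,wellorder} \<Rightarrow> 'n S2) \<Rightarrow> ((real, 'n) vec, 'n) vec" where
  "normalizing_A q = (\<chi> m k. let d = diag_coeff q; f = first_idx in
     if m = k then (if m = f then 0 else - (d f f f + d m f f) / 2)
     else (d m k m + d k m k + d k k m + d m m k) / 8)"

definition normalizing_B :: "('n::{finite,wellorder} \<Rightarrow> 'n S2) \<Rightarrow> ((real, 'n) vec, 'n) vec" where
  "normalizing_B q = (\<chi> m i. let A = normalizing_A q; d = diag_coeff q in
     if m = i then A$i$i - d i i i else d i i m - A$m$i)"

lemma sub_normalizing_LPhi_in_Wsub: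
  assumes "q \<in> S2tuples"
  shows "(\<lambda>i x y. q i x y - LPhi (normalizing_A q) (normalizing_B q) i x y) \<in> Wsub"
proof -
  define A B where "A = normalizing_A q" and "B = normalizing_B q"
  have r_nth: "(q j (ebasis k) (ebasis k) - LPhi A B j (ebasis k) (ebasis k)) $ m =
      diag_coeff q k j m
      - (A$m$j - 2 * A$k$k * (if m = j then 1 else 0) + 2 * A$j$k * (if m = k then 1 else 0)
         + B$m$j - 2 * B$k$j * (if m = k then 1 else 0))" for j k m
    by (simp add: diag_coeff_def LPhi_ebasis_ebasis_nth)
  note coeffs = A_def B_def normalizing_A_def normalizing_B_def Let_def
  have "(\<lambda>i x y. q i x y - LPhi A B i x y) \<in> Wsub"
    unfolding Wsub_def
  proof (intro CollectI conjI allI diff_in_S2tuples assms LPhi_in_S2tuples)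
    fix i j
    show "q j (ebasis j) (ebasis j) - LPhi A B j (ebasis j) (ebasis j) = 0"
      by (simp only: vec_eq_iff r_nth) (simp add: coeffs field_simps)
    show "ebasis i \<bullet> (q j (ebasis i) (ebasis i) - LPhi A B j (ebasis i) (ebasis i))
        + ebasis j \<bullet> (q i (ebasis j) (ebasis j) - LPhi A B i (ebasis j) (ebasis j)) = 0"
      by (simp only: ebasis_inner r_nth) (simp add: coeffs field_simps)
    show "ebasis first_idx \<bullet> (q first_idx (ebasis j) (ebasis j)
        - LPhi A B first_idx (ebasis j) (ebasis j)) = 0"
      by (simp only: ebasis_inner r_nth) (simp add: coeffs field_simps)
  qed
  then show ?thesis by (simp only: A_def B_def)
qed

theorem lemma2p13:
  assumes "kerPsi \<inter> Wsub = {(\<lambda>i \<xi> \<eta>. 0) :: 'n::{finite,wellorder} \<Rightarrow> 'n S2}"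
  shows "(kerPsi :: ('n \<Rightarrow> 'n S2) set) = imPhi"
proof
  show "(kerPsi :: ('n \<Rightarrow> 'n S2) set) \<subseteq> imPhi"
  proof
    fix q :: "'n \<Rightarrow> 'n S2"
    assume q: "q \<in> kerPsi"
    define p where "p = LPhi (normalizing_A q) (normalizing_B q)"
    have "(\<lambda>i x y. q i x y - p i x y) \<in> kerPsi"
      using q imPhi_subset_kerPsi by (auto simp: p_def imPhi_def intro!: diff_in_kerPsi)
    moreover have "(\<lambda>i x y. q i x y - p i x y) \<in> Wsub"
      using q by (simp add: p_def kerPsi_def sub_normalizing_LPhi_in_Wsub)
    ultimately have "(\<lambda>i x y. q i x y - p i x y) = (\<lambda>i \<xi> \<eta>. 0)"
      using assms by blast
    then have "q = p" by (simp add: fun_eq_iff)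
    then show "q \<in> imPhi" by (auto simp: p_def imPhi_def)
  qed
qed (rule imPhi_subset_kerPsi)

end
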